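(* Let $S=\mathbb{C}[x_1,x_2,x_3,x_4]$. Then the ideal $I=\langle h_1,h_4\rangle$ is a prime ideal of $S$.
   Context: $h_a=\sum_{1\le i_1\le\cdots\le i_a\le 4}x_{i_1}\cdots x_{i_a}$ denotes the complete symmetric polynomial of degree $a$ in $x_1,\dots,x_4$. *)

theory Defs
  imports "HOL-Computational_Algebra.Polynomial" Complex_Main
begin

text \<open>The polynomial ring S = C[x1,x2,x3,x4], realised as the iterated univariate
  polynomial ring ((C[x1])[x2])[x3])[x4] (canonically isomorphic to S).\<close>
type_synonym S = "complex poly poly poly poly"

definition x1 :: S where "x1 = [:[:[:[:0, 1:]:]:]:]"
definition x2 :: S where "x2 = [:[:[:0, 1:]:]:]"
definition x3 :: S where "x3 = [:[:0, 1:]:]"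
definition x4 :: S where "x4 = [:0, 1:]"

definition h :: "nat \<Rightarrow> S" where
  "h a = (\<Sum>e1\<le>a. \<Sum>e2\<le>a. \<Sum>e3\<le>a. \<Sum>e4\<le>a.
            if e1 + e2 + e3 + e4 = a then x1 ^ e1 * x2 ^ e2 * x3 ^ e3 * x4 ^ e4 else 0)"

definition ideal_gen :: "'a::comm_ring_1 set \<Rightarrow> 'a set" where
  "ideal_gen G = {\<Sum>g\<in>F. r g * g | F r. finite F \<and> F \<subseteq> G}"

definition is_ideal :: "'a::comm_ring_1 set \<Rightarrow> bool" where
  "is_ideal I \<longleftrightarrow> 0 \<in> I \<and> (\<forall>a\<in>I. \<forall>b\<in>I. a + b \<in> I) \<and> (\<forall>a\<in>I. \<forall>r. r * a \<in> I)"

definition prime_ideal :: "'a::comm_ring_1 set \<Rightarrow> bool" where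
  "prime_ideal I \<longleftrightarrow> is_ideal I \<and> I \<noteq> UNIV \<and> (\<forall>a b. a * b \<in> I \<longrightarrow> a \<in> I \<or> b \<in> I)"

end

theory Submission
  imports Defs "HOL-Computational_Algebra.Field_as_Ring" "HOL-Computational_Algebra.Polynomial_Factorial"
begin

(* Since h1 = x4 + (x1 + x2 + x3) is monic and linear in x4, reducing modulo h1 identifies
   S/I with C[x1,x2,x3]/(F), where F = h4(x1, x2, x3, -x1-x2-x3); so I is prime as soon as F is
   irreducible in the factorial ring C[x1,x2,x3].  Substituting x3 := x3 - (x1 + x2)/2 turns F
   into the biquadratic x3^4 + p x3^2 + s over C[x1,x2].  A monic biquadratic over a domain is
   irreducible unless s or its discriminant p^2 - 4s is a square; here p^2 - 4s has odd degree
   in x2, and s is not even a square after setting x1 = 1. *)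

lemma ideal_gen_pair: "ideal_gen {a, b} = {r * a + s * b | r s. True}"
  for a b :: "'a::comm_ring_1"
proof (intro equalityI subsetI)
  fix x assume "x \<in> ideal_gen {a, b}"
  then obtain F r where F: "F \<subseteq> {a, b}" and x: "x = (\<Sum>g\<in>F. r g * g)"
    unfolding ideal_gen_def by blast
  define r' where "r' g = (if g \<in> F then r g else 0)" for g
  have "x = (\<Sum>g\<in>{a, b}. r' g * g)"
    unfolding x r'_def using F by (intro sum.mono_neutral_cong_left) auto
  also have "\<dots> = r' a * a + (if b = a then 0 else r' b) * b"
    by (cases "b = a") simp_all
  finally show "x \<in> {r * a + s * b | r s. True}" by blast
next
  fix x assume "x \<in> {r * a + s * b | r s. True}"
  then obtain r s where x: "x = r * a + s * b" by blast
  show "x \<in> ideal_gen {a, b}"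
  proof (cases "a = b")
    case True
    then have "x = (\<Sum>g\<in>{a}. (r + s) * g)" using x by (simp add: algebra_simps)
    then show ?thesis
      unfolding ideal_gen_def using True by (intro CollectI exI[of _ "{a}"] exI[of _ "\<lambda>_. r + s"]) simp
  next
    case False
    then have "x = (\<Sum>g\<in>{a, b}. (if g = a then r else s) * g)" using x by simp
    then show ?thesis
      unfolding ideal_gen_def by (intro CollectI exI[of _ "{a, b}"] exI[of _ "\<lambda>g. if g = a then r else s"]) simp
  qed
qed

lemma ideal_gen_linear_pair:
  fixes g :: "'a::comm_ring_1" and H :: "'a poly"
  shows "ideal_gen {[:g, 1:], H} = {P. poly H (- g) dvd poly P (- g)}"
proof (intro equalityI subsetI)
  fix P assume "P \<in> ideal_gen {[:g, 1:], H}"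
  then obtain r s where "P = r * [:g, 1:] + s * H" by (auto simp: ideal_gen_pair)
  then show "P \<in> {P. poly H (- g) dvd poly P (- g)}" by simp
next
  fix P assume "P \<in> {P. poly H (- g) dvd poly P (- g)}"
  then obtain c where c: "poly P (- g) = poly H (- g) * c" by (auto elim: dvdE)
  define X Q\<^sub>P Q\<^sub>H where "X = [:g, 1:]"
    and "Q\<^sub>P = synthetic_div P (- g)" and "Q\<^sub>H = synthetic_div H (- g)"
  have "P = X * Q\<^sub>P + [:c:] * [:poly H (- g):]"
    using synthetic_div_correct'[of "- g" P] by (simp add: X_def Q\<^sub>P_def c mult.commute)
  also have "\<dots> = (Q\<^sub>P - [:c:] * Q\<^sub>H) * X + [:c:] * (X * Q\<^sub>H + [:poly H (- g):])"
    by (simp add: algebra_simps)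
  also have "X * Q\<^sub>H + [:poly H (- g):] = H"
    using synthetic_div_correct'[of "- g" H] by (simp add: X_def Q\<^sub>H_def)
  finally show "P \<in> ideal_gen {[:g, 1:], H}"
    unfolding ideal_gen_pair X_def by blast
qed

lemma prime_ideal_dvd_poly:
  fixes F :: "'a::comm_ring_1"
  assumes "prime_elem F"
  shows "prime_ideal {P. F dvd poly P a}"
proof -
  have "1 \<notin> {P. F dvd poly P a}" using prime_elem_not_unit[OF assms] by simp
  then have "{P. F dvd poly P a} \<noteq> UNIV" by blast
  moreover have "F dvd poly (P * Q) a \<longleftrightarrow> F dvd poly P a \<or> F dvd poly Q a" for P Q
    using assms by (simp add: prime_elem_dvd_mult_iff)
  ultimately show ?thesis
    unfolding prime_ideal_def is_ideal_def by simp
qed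

lemma degree_le_2_eq: "degree p \<le> 2 \<Longrightarrow> p = [:coeff p 0, coeff p 1, coeff p 2:]"
  by (rule poly_eqI) (auto simp: coeff_pCons coeff_eq_0 numeral_2_eq_2 split: nat.split)

lemma square_quadratic:
  "[:a, b, c:]^2 = [:a * a, 2 * a * b, 2 * a * c + b * b, 2 * b * c, c * c :: 'a::comm_ring_1:]"
  by (simp add: power2_eq_square algebra_simps)

lemma odd_degree_not_square:
  fixes p q :: "'a::idom poly"
  assumes "odd (degree p)"
  shows "q^2 \<noteq> p"
proof
  assume sq: "q^2 = p"
  then have "q \<noteq> 0" using assms by auto
  then have "degree p = 2 * degree q" using sq by (metis degree_power_eq mult.commute)
  then show False using assms by simp
qed

lemma poly_eqI_infinite:
  fixes p q :: "'a::idom poly"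
  assumes "infinite A" and "\<And>x. x \<in> A \<Longrightarrow> poly p x = poly q x"
  shows "p = q"
proof (rule ccontr)
  assume "p \<noteq> q"
  then have "finite {x. poly (p - q) x = 0}" by (intro poly_roots_finite) simp
  moreover have "A \<subseteq> {x. poly (p - q) x = 0}" using assms(2) by auto
  ultimately show False using assms(1) finite_subset by blast
qed

lemma infinite_range_inj:
  fixes f :: "'a \<Rightarrow> 'b"
  assumes "infinite (UNIV :: 'a set)" and "inj f"
  shows "infinite (range f)"
  using assms finite_imageD by blast

lemma is_unit_pcompose_linear_iff:
  fixes C :: "'a::idom poly"
  shows "C \<circ>\<^sub>p [:a, 1:] dvd 1 \<longleftrightarrow> C dvd 1"
proof -
  have "degree (C \<circ>\<^sub>p [:a, 1:]) = degree C" by (simp add: degree_pcompose)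
  moreover have "C \<circ>\<^sub>p [:a, 1:] = C" if "degree C = 0"
    using that by (metis degree_0_id pcompose_const)
  ultimately show ?thesis by (metis is_unit_poly_iff degree_pCons_0)
qed

lemma irreducible_pcompose_linear:
  fixes p :: "'a::idom poly"
  assumes "irreducible (p \<circ>\<^sub>p [:a, 1:])"
  shows "irreducible p"
proof (rule irreducibleI)
  show "p \<noteq> 0" using assms by auto
  show "\<not> p dvd 1" using assms irreducible_not_unit is_unit_pcompose_linear_iff by blast
  fix A B assume "p = A * B"
  then have "p \<circ>\<^sub>p [:a, 1:] = (A \<circ>\<^sub>p [:a, 1:]) * (B \<circ>\<^sub>p [:a, 1:])" by (simp add: pcompose_mult)
  then show "A dvd 1 \<or> B dvd 1"
    using assms irreducibleD is_unit_pcompose_linear_iff by metis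
qed

lemma biquadratic_no_root:
  fixes p s l :: "'a::comm_ring_1"
  assumes "\<And>q. q^2 \<noteq> p^2 - 4 * s"
  shows "poly [:s, 0, p, 0, 1:] l \<noteq> 0"
proof
  assume root: "poly [:s, 0, p, 0, 1:] l = 0"
  have "(2 * l^2 + p)^2 = p^2 - 4 * s + 4 * poly [:s, 0, p, 0, 1:] l"
    by (simp add: algebra_simps power2_eq_square)
  then have "(2 * l^2 + p)^2 = p^2 - 4 * s" unfolding root by simp
  then show False using assms by blast
qed

lemma biquadratic_no_monic_linear_factor:
  fixes p s :: "'a::comm_ring_1" and C :: "'a poly"
  assumes "\<And>q. q^2 \<noteq> p^2 - 4 * s" and "degree C = 1" and "lead_coeff C = 1"
  shows "\<not> C dvd [:s, 0, p, 0, 1:]"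
proof
  have "coeff C 2 = 0" using assms(2) by (simp add: coeff_eq_0)
  then have "C = [:- (- coeff C 0), 1:]" using degree_le_2_eq[of C] assms(2,3) by simp
  moreover assume "C dvd [:s, 0, p, 0, 1:]"
  ultimately have "poly [:s, 0, p, 0, 1:] (- coeff C 0) = 0" by (metis poly_eq_0_iff_dvd)
  then show False using biquadratic_no_root assms(1) by blast
qed

lemma biquadratic_no_monic_quadratic_factors:
  fixes p s \<beta> \<delta> \<alpha> \<alpha>' :: "'a::idom"
  assumes s: "\<And>q. q^2 \<noteq> s" and disc: "\<And>q. q^2 \<noteq> p^2 - 4 * s"
  shows "[:\<beta>, \<alpha>, 1:] * [:\<delta>, \<alpha>', 1:] \<noteq> [:s, 0, p, 0, 1:]"
proof
  assume "[:\<beta>, \<alpha>, 1:] * [:\<delta>, \<alpha>', 1:] = [:s, 0, p, 0, 1:]"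
  then have eq: "\<beta> * \<delta> = s" "\<beta> * \<alpha>' + \<alpha> * \<delta> = 0" "\<beta> + \<alpha> * \<alpha>' + \<delta> = p" "\<alpha> + \<alpha>' = 0"
    by (simp_all add: algebra_simps)
  then have "\<alpha>' = - \<alpha>" by (simp add: eq_neg_iff_add_eq_0 add.commute)
  then have "\<alpha> * (\<delta> - \<beta>) = 0" using eq(2) by (simp add: algebra_simps)
  then consider "\<alpha> = 0" | "\<delta> = \<beta>" by auto
  then show False
  proof cases
    case 1
    have "(\<beta> - \<delta>)^2 = (\<beta> + \<delta>)^2 - 4 * (\<beta> * \<delta>)" by (simp add: power2_eq_square algebra_simps)
    then have "(\<beta> - \<delta>)^2 = p^2 - 4 * s" using eq 1 by simp
    then show False using disc by blast
  next
    case 2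
    then show False using eq(1) s by (simp add: power2_eq_square)
  qed
qed

lemma irreducible_biquadratic:
  fixes p s :: "'a::idom"
  assumes s: "\<And>q. q^2 \<noteq> s" and disc: "\<And>q. q^2 \<noteq> p^2 - 4 * s"
  shows "irreducible [:s, 0, p, 0, 1:]"
proof (rule irreducibleI)
  define E where "E = [:s, 0, p, 0, 1:]"
  show "E \<noteq> 0" by (simp add: E_def)
  show "\<not> E dvd 1" by (simp add: E_def is_unit_poly_iff)
  have no_monic_linear_factor: "\<not> C dvd E" if "degree C = 1" "lead_coeff C = 1" for C
    using biquadratic_no_monic_linear_factor[OF disc that] by (simp add: E_def)
  have unit_if_const: "C dvd 1" if "degree C = 0" "lead_coeff C dvd 1" for C :: "'a poly"
    using that by (metis degree_0_id is_unit_poly_iff)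
  fix A B assume AB: "E = A * B"
  then have "A \<noteq> 0" "B \<noteq> 0" using \<open>E \<noteq> 0\<close> by auto
  have "degree E = 4" by (simp add: E_def)
  then have deg: "degree A + degree B = 4" using AB \<open>A \<noteq> 0\<close> \<open>B \<noteq> 0\<close> by (metis degree_mult_eq)
  have "lead_coeff E = 1" by (simp add: E_def)
  then have lc: "lead_coeff A * lead_coeff B = 1" using AB by (metis lead_coeff_mult)
  define A\<^sub>1 B\<^sub>1 where "A\<^sub>1 = smult (lead_coeff B) A" and "B\<^sub>1 = smult (lead_coeff A) B"
  have monic: "lead_coeff A\<^sub>1 = 1" "lead_coeff B\<^sub>1 = 1"
    using lc \<open>A \<noteq> 0\<close> \<open>B \<noteq> 0\<close> by (simp_all add: A\<^sub>1_def B\<^sub>1_def mult.commute)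
  have deg1: "degree A\<^sub>1 = degree A" "degree B\<^sub>1 = degree B"
    using lc by (auto simp: A\<^sub>1_def B\<^sub>1_def)
  have prod: "A\<^sub>1 * B\<^sub>1 = E" using AB lc by (simp add: A\<^sub>1_def B\<^sub>1_def mult.commute)
  consider "degree A = 0" | "degree B = 0" | "degree A = 1" | "degree B = 1" | "degree A = 2" "degree B = 2"
    using deg by linarith
  then show "A dvd 1 \<or> B dvd 1"
  proof cases
    case 1
    then show ?thesis using unit_if_const lc by (metis dvdI)
  next
    case 2
    then show ?thesis using unit_if_const lc by (metis dvdI mult.commute)
  next
    case 3
    then show ?thesis using no_monic_linear_factor[of A\<^sub>1] prod monic deg1 by (metis dvd_triv_left)
  next
    case 4
    then show ?thesis using no_monic_linear_factor[of B\<^sub>1] prod monic deg1 by (metis dvd_triv_right)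
  next
    case 5
    then have "A\<^sub>1 = [:coeff A\<^sub>1 0, coeff A\<^sub>1 1, 1:]" "B\<^sub>1 = [:coeff B\<^sub>1 0, coeff B\<^sub>1 1, 1:]"
      using degree_le_2_eq monic deg1 by (metis order.refl)+
    then show ?thesis
      using biquadratic_no_monic_quadratic_factors[OF s disc] prod by (metis E_def)
  qed
qed

type_synonym R2 = "complex poly poly"
type_synonym R3 = "complex poly poly poly"

definition eval2 :: "complex \<Rightarrow> complex \<Rightarrow> R2 \<Rightarrow> complex" where
  "eval2 a b q = poly (poly q [:b:]) a"

definition eval3 :: "complex \<Rightarrow> complex \<Rightarrow> complex \<Rightarrow> R3 \<Rightarrow> complex" where
  "eval3 a b c q = eval2 a b (poly q [:[:c:]:])"

definition eval4 :: "complex \<Rightarrow> complex \<Rightarrow> complex \<Rightarrow> complex \<Rightarrow> S \<Rightarrow> complex" where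
  "eval4 a b c d q = eval3 a b c (poly q [:[:[:d:]:]:])"

lemma eval2_simps [simp]:
  "eval2 a b (p + q) = eval2 a b p + eval2 a b q" "eval2 a b (p * q) = eval2 a b p * eval2 a b q"
  "eval2 a b (p - q) = eval2 a b p - eval2 a b q" "eval2 a b (- p) = - eval2 a b p"
  "eval2 a b 0 = 0" "eval2 a b 1 = 1" "eval2 a b (numeral n) = numeral n" "eval2 a b (p ^ k) = eval2 a b p ^ k"
  "eval2 a b (sum f A) = (\<Sum>x\<in>A. eval2 a b (f x))"
  "eval2 a b (pCons r p) = poly r a + b * eval2 a b p"
  "eval2 a b (smult r p) = poly r a * eval2 a b p"
  by (simp_all add: eval2_def poly_sum)

lemma eval3_simps [simp]:
  "eval3 a b c (p + q) = eval3 a b c p + eval3 a b c q" "eval3 a b c (p * q) = eval3 a b c p * eval3 a b c q"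
  "eval3 a b c (p - q) = eval3 a b c p - eval3 a b c q" "eval3 a b c (- p) = - eval3 a b c p"
  "eval3 a b c 0 = 0" "eval3 a b c 1 = 1" "eval3 a b c (numeral n) = numeral n" "eval3 a b c (p ^ k) = eval3 a b c p ^ k"
  "eval3 a b c (sum f A) = (\<Sum>x\<in>A. eval3 a b c (f x))"
  "eval3 a b c (pCons r p) = eval2 a b r + c * eval3 a b c p"
  by (simp_all add: eval3_def eval2_def poly_sum)

lemma eval4_simps [simp]:
  "eval4 a b c d (p + q) = eval4 a b c d p + eval4 a b c d q" "eval4 a b c d (p * q) = eval4 a b c d p * eval4 a b c d q"
  "eval4 a b c d (p - q) = eval4 a b c d p - eval4 a b c d q" "eval4 a b c d (- p) = - eval4 a b c d p"
  "eval4 a b c d 0 = 0" "eval4 a b c d 1 = 1" "eval4 a b c d (numeral n) = numeral n" "eval4 a b c d (p ^ k) = eval4 a b c d p ^ k"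
  "eval4 a b c d (sum f A) = (\<Sum>x\<in>A. eval4 a b c d (f x))"
  "eval4 a b c d (pCons r p) = eval3 a b c r + d * eval4 a b c d p"
  by (simp_all add: eval4_def eval3_def eval2_def poly_sum)

lemma eval4_variables [simp]:
  "eval4 a b c d x1 = a" "eval4 a b c d x2 = b" "eval4 a b c d x3 = c" "eval4 a b c d x4 = d"
  by (simp_all add: x1_def x2_def x3_def x4_def)

lemma eval3_poly: "eval3 a b c (poly (H :: S) t) = eval4 a b c (eval3 a b c t) H"
  by (induct H) simp_all

lemma eval3_pcompose: "eval3 a b c (p \<circ>\<^sub>p q) = eval3 a b (eval3 a b c q) p"
proof -
  have "eval2 a b (poly p r) = eval3 a b (eval2 a b r) p" for r
    by (induct p) simp_all
  then show ?thesis by (simp add: eval3_def poly_pcompose)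
qed

lemma eval2_inj: "(\<And>a b. eval2 a b P = eval2 a b Q) \<Longrightarrow> P = Q"
proof (rule poly_eqI_infinite)
  show "infinite (range (\<lambda>b::complex. [:b:]))"
    by (rule infinite_range_inj) (auto intro: injI simp: infinite_UNIV_char_0)
next
  fix r :: "complex poly" assume "\<And>a b. eval2 a b P = eval2 a b Q" and "r \<in> range (\<lambda>b. [:b:])"
  then show "poly P r = poly Q r" by (auto simp: eval2_def poly_eq_poly_eq_iff[symmetric])
qed

lemma eval3_inj: "(\<And>a b c. eval3 a b c P = eval3 a b c Q) \<Longrightarrow> P = Q"
proof (rule poly_eqI_infinite)
  show "infinite (range (\<lambda>c::complex. [:[:c:]:]))"
    by (rule infinite_range_inj) (auto intro: injI simp: infinite_UNIV_char_0)
next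
  fix r :: R2 assume "\<And>a b c. eval3 a b c P = eval3 a b c Q" and "r \<in> range (\<lambda>c. [:[:c:]:])"
  then show "poly P r = poly Q r" by (auto intro: eval2_inj simp: eval3_def)
qed

(* In C[x1][x2][x3]: sum3 = x1 + x2 + x3 and shift = -(x1 + x2)/2.  In C[x1][x2]:
   biq_p = (3x1^2 + 4x1x2 + 3x2^2)/2, biq_s = (9x1^4 + 8x1^3x2 + 14x1^2x2^2 + 8x1x2^3 + 9x2^4)/16
   and biq_disc = x1x2(4x1^2 + 5x1x2 + 4x2^2). *)

definition sum3 :: R3 where "sum3 = [:[:[:0, 1:], 1:], 1:]"

definition h4_restricted :: R3 where "h4_restricted = poly (h 4) (- sum3)"

definition shift :: R2 where "shift = [:[:0, -1/2:], [:-1/2:]:]"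

definition biq_p :: R2 where "biq_p = [:[:0, 0, 3/2:], [:0, 2:], [:3/2:]:]"

definition biq_s :: R2 where
  "biq_s = [:[:0, 0, 0, 0, 9/16:], [:0, 0, 0, 1/2:], [:0, 0, 7/8:], [:0, 1/2:], [:9/16:]:]"

definition biq_disc :: R2 where "biq_disc = [:0, [:0, 0, 0, 4:], [:0, 0, 5:], [:0, 4:]:]"

lemma h1_eq: "h 1 = [:sum3, 1:]"
  by (simp add: h_def x1_def x2_def x3_def x4_def sum3_def)

lemma eval4_h:
  "eval4 a b c d (h n) = (\<Sum>e1\<le>n. \<Sum>e2\<le>n. \<Sum>e3\<le>n. \<Sum>e4\<le>n.
     if e1 + e2 + e3 + e4 = n then a ^ e1 * b ^ e2 * c ^ e3 * d ^ e4 else 0)"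
  by (simp add: h_def if_distrib cong: if_cong)

lemma sum_atMost_4: "(\<Sum>i\<le>(4::nat). f i) = f 0 + f 1 + f 2 + f 3 + f 4"
  by (simp add: eval_nat_numeral atMost_Suc add.commute add.left_commute)

lemma eval4_h4:
  "eval4 a b c d (h 4) =
     a^4 + b^4 + c^4 + d^4
   + a^3*b + a^3*c + a^3*d + b^3*a + b^3*c + b^3*d + c^3*a + c^3*b + c^3*d + d^3*a + d^3*b + d^3*c
   + a^2*b^2 + a^2*c^2 + a^2*d^2 + b^2*c^2 + b^2*d^2 + c^2*d^2
   + a^2*b*c + a^2*b*d + a^2*c*d + b^2*a*c + b^2*a*d + b^2*c*d + c^2*a*b + c^2*a*d + c^2*b*d
   + d^2*a*b + d^2*a*c + d^2*b*c + a*b*c*d"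
  unfolding eval4_h by (simp only: sum_atMost_4) (simp add: algebra_simps)

lemma h4_restricted_shift: "h4_restricted \<circ>\<^sub>p [:shift, 1:] = [:biq_s, 0, biq_p, 0, 1:]"
proof (rule eval3_inj)
  fix a b c :: complex
  define c' where "c' = c - (a + b) / 2"
  have "eval3 a b c [:shift, 1:] = c'" by (simp add: shift_def c'_def field_simps)
  then have "eval3 a b c (h4_restricted \<circ>\<^sub>p [:shift, 1:]) = eval4 a b c' (- (a + b + c')) (h 4)"
    by (simp add: eval3_pcompose h4_restricted_def eval3_poly sum3_def)
  also have "\<dots> = eval3 a b c [:biq_s, 0, biq_p, 0, 1:]"
    unfolding eval4_h4 c'_def
    by (simp add: biq_s_def biq_p_def field_simps power2_eq_square power3_eq_cube power4_eq_xxxx)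
  finally show "eval3 a b c (h4_restricted \<circ>\<^sub>p [:shift, 1:]) = eval3 a b c [:biq_s, 0, biq_p, 0, 1:]" .
qed

lemma biq_discriminant: "biq_p^2 - 4 * biq_s = biq_disc"
  by (rule eval2_inj)
    (simp add: biq_p_def biq_s_def biq_disc_def field_simps power2_eq_square power3_eq_cube power4_eq_xxxx)

lemma biq_disc_not_square: "q^2 \<noteq> biq_p^2 - 4 * biq_s"
  unfolding biq_discriminant by (rule odd_degree_not_square) (simp add: biq_disc_def)

lemma not_square_specialised_biq_s:
  fixes a b c :: "'a::field_char_0"
  shows "[:a, b, c:]^2 \<noteq> [:9/16, 1/2, 7/8, 1/2, 9/16:]"
proof
  assume "[:a, b, c:]^2 = [:9/16, 1/2, 7/8, 1/2, 9/16:]"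
  then have aa: "a * a = 9/16" and "2 * a * b = 1/2" "2 * a * c + b * b = 7/8" "2 * b * c = 1/2"
    unfolding square_quadratic by simp_all
  then have ab: "a * b = 1/4" and bc: "b * c = 1/4" by (simp_all add: algebra_simps)
  have "b * (a - c) = a * b - b * c" by (simp add: algebra_simps)
  also have "\<dots> = 0" by (simp only: ab bc diff_self)
  moreover have "b \<noteq> 0" using ab by auto
  ultimately have "c = a" by simp
  have "b * b = (2 * a * c + b * b) - 2 * (a * a)" unfolding \<open>c = a\<close> by algebra
  also have "\<dots> = - 1/4" unfolding aa \<open>2 * a * c + b * b = 7/8\<close> by simp
  finally have bb: "b * b = - 1/4" .
  have "1/16 = (a * b) * (a * b)" unfolding ab by simp
  also have "\<dots> = (a * a) * (b * b)" by algebra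
  also have "\<dots> = - 9/64" unfolding aa bb by simp
  finally show False by (simp add: field_simps)
qed

lemma biq_s_not_square: "q^2 \<noteq> biq_s"
proof
  assume sq: "q^2 = biq_s"
  then have "q \<noteq> 0" by (auto simp: biq_s_def)
  moreover have "degree biq_s = 4" by (simp add: biq_s_def)
  moreover have "degree (q^2) = 2 * degree q" using \<open>q \<noteq> 0\<close> by (rule degree_power_eq)
  ultimately have "degree q = 2" using sq by simp
  then obtain q0 q1 q2 where q: "q = [:q0, q1, q2:]" using degree_le_2_eq[of q] by auto
  have coeffs: "q0 * q0 = [:0, 0, 0, 0, 9/16:]" "2 * q0 * q1 = [:0, 0, 0, 1/2:]"
    "2 * q0 * q2 + q1 * q1 = [:0, 0, 7/8:]" "2 * q1 * q2 = [:0, 1/2:]" "q2 * q2 = [:9/16:]"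
    using sq unfolding q square_quadratic biq_s_def by simp_all
  have "[:poly q0 1, poly q1 1, poly q2 1:]^2 = [:poly (q0 * q0) 1, poly (2 * q0 * q1) 1,
      poly (2 * q0 * q2 + q1 * q1) 1, poly (2 * q1 * q2) 1, poly (q2 * q2) 1:]"
    unfolding square_quadratic by simp
  also have "\<dots> = [:9/16, 1/2, 7/8, 1/2, 9/16:]"
    unfolding coeffs by simp
  finally show False using not_square_specialised_biq_s by blast
qed

lemma prime_elem_h4_restricted: "prime_elem h4_restricted"
proof -
  have "irreducible [:biq_s, 0, biq_p, 0, 1:]"
    using irreducible_biquadratic biq_s_not_square biq_disc_not_square by blast
  then have "irreducible h4_restricted"
    unfolding h4_restricted_shift[symmetric] by (rule irreducible_pcompose_linear)
  then show ?thesis by (rule irreducible_imp_prime_elem)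
qed

theorem mainTheorem10:
  shows "prime_ideal (ideal_gen {h 1, h 4})"
proof -
  have "ideal_gen {h 1, h 4} = {P. h4_restricted dvd poly P (- sum3)}"
    unfolding h1_eq h4_restricted_def by (rule ideal_gen_linear_pair)
  then show ?thesis
    using prime_ideal_dvd_poly[OF prime_elem_h4_restricted] by simp
qed

end
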